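(* Let $V_1,\dots,V_{15}$, $w_1,\dots,w_{15}$ and the quantum permutation matrix $u$ with diagonal blocks $u^{(i)}$ be as described in the context. Let $i\neq j$, $k,s\in V_i$ and $l,t\in V_j$. (i) If $d(k,l)=d(s,t)$, then $u^{(i)}_{ks}u^{(j)}_{lt}=0$ if and only if $\langle w_i,w_j\rangle=0$. (ii) If $d(k,l)\neq d(s,t)$, then $u^{(i)}_{ks}u^{(j)}_{lt}=0$ if and only if $\langle w_i,w_j\rangle\neq0$.
   Context: The $E_8$ root system $\Psi_{E_8}\subset\mathbb{R}^8$ consists of the 240 vectors $\pm e_i\pm e_j$ ($1\le i<j\le 8$) and all $x\in\{\pm1\}^8$ with $\prod_i x_i=1$. $G_{E_8}$ is the graph with vertices $v_x$, $x\in\Psi_{E_8}$, where $v_x=v_{-x}$, and $v_x\sim v_y$ iff $\langle x,y\rangle=0$; $d(a,b)$ is graph distance in $G_{E_8}$. Let $I=\mathrm{diag}(1,1)$, $X=\begin{pmatrix}0&1\\1&0\end{pmatrix}$, $Z=\mathrm{diag}(1,-1)$, $Y=XZ$. For $M=M_1\otimes M_2\otimes M_3$ with $M_i\in\{I,X,Y,Z\}$, $\sigma_M:v_x\mapsto v_{Mx}$ is an automorphism of $G_{E_8}$ and $L=\{\sigma_M\}\cong\mathbb{Z}_2^6$. Let $V_1,\dots,V_{15}$ be the 15 orbits of $L$ on $V(G_{E_8})$ (each of size 8). For each $i$ choose $w_i\in\Psi_{E_8}$ with $v_{w_i}\in V_i$. For $x\in\Psi_{E_8}$ let $P_x=\frac{1}{\|x\|^2}xx^*\in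 M_8(\mathbb{C})$. For $v_y,v_z\in V_i$ choose $M_{yz}=M_1\otimes M_2\otimes M_3$ ($M_k\in\{I,X,Y,Z\}$) with $M_{yz}y=\pm z$, and set $u^{(i)}_{v_yv_z}=M_{yz}P_{w_i}M_{yz}^*=P_{M_{yz}w_i}$. The matrix $u$ is block diagonal with respect to $V_1,\dots,V_{15}$ with blocks $u^{(i)}=(u^{(i)}_{v_yv_z})_{v_y,v_z\in V_i}$; it is a quantum permutation matrix with entries in $M_8(\mathbb{C})$. *)

theory Defs
  imports Complex_Main "Jordan_Normal_Form.Matrix"
begin

text \<open>Vectors in R^8 with integer coordinates are represented as int lists of length 8;
 coordinate e_i (i = 1..8) corresponds to list index i-1.\<close>

definition e8_roots :: "int list set" where
  "e8_roots =
     {x. length x = 8 \<and> set x \<subseteq> {-1,0,1} \<and> length (filter (\<lambda>a. a \<noteq> 0) x) = 2}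
   \<union> {x. length x = 8 \<and> set x \<subseteq> {-1,1} \<and> prod_list x = 1}"

definition ip :: "int list \<Rightarrow> int list \<Rightarrow> int" where
  "ip x y = (\<Sum>i<8. x ! i * y ! i)"

definition vert :: "int list \<Rightarrow> int list set" where
  "vert x = {x, map uminus x}"

definition e8_vertices :: "int list set set" where
  "e8_vertices = vert ` e8_roots"

definition e8_adj :: "int list set \<Rightarrow> int list set \<Rightarrow> bool" where
  "e8_adj p q \<longleftrightarrow> p \<in> e8_vertices \<and> q \<in> e8_vertices \<and> (\<exists>x\<in>p. \<exists>y\<in>q. ip x y = 0)"

fun e8_walk :: "nat \<Rightarrow> int list set \<Rightarrow> int list set \<Rightarrow> bool" where
  "e8_walk 0 p q = (p = q)"
| "e8_walk (Suc n) p q = (\<exists>r. e8_adj p r \<and> e8_walk n r q)"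

definition e8_dist :: "int list set \<Rightarrow> int list set \<Rightarrow> nat" where
  "e8_dist p q = (LEAST n. e8_walk n p q)"

text \<open>Pauli matrices, coded 0 = I, 1 = X, 2 = Y = XZ, 3 = Z; entry (a,b), a,b \<in> {0,1}.\<close>
definition pauli :: "nat \<Rightarrow> nat \<Rightarrow> nat \<Rightarrow> int" where
  "pauli m a b =
    (if m = 0 then (if a = b then 1 else 0)
     else if m = 1 then (if a \<noteq> b then 1 else 0)
     else if m = 2 then (if a = 0 \<and> b = 1 then -1 else if a = 1 \<and> b = 0 then 1 else 0)
     else (if a = b then (if a = 0 then 1 else -1) else 0))"

text \<open>Entry (a,b) of the Kronecker product M1 \<otimes> M2 \<otimes> M3 (8 x 8, standard index convention).\<close>
definition kron3 :: "nat \<times> nat \<times> nat \<Rightarrow> nat \<Rightarrow> nat \<Rightarrow> int" where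
  "kron3 M a b = (case M of (m1, m2, m3) \<Rightarrow>
     pauli m1 (a div 4) (b div 4) * pauli m2 ((a div 2) mod 2) ((b div 2) mod 2)
       * pauli m3 (a mod 2) (b mod 2))"

definition Lset :: "(nat \<times> nat \<times> nat) set" where
  "Lset = {0..3} \<times> {0..3} \<times> {0..3}"

definition act :: "nat \<times> nat \<times> nat \<Rightarrow> int list \<Rightarrow> int list" where
  "act M x = map (\<lambda>a. \<Sum>b<8. kron3 M a b * x ! b) [0..<8]"

definition vmap :: "nat \<times> nat \<times> nat \<Rightarrow> int list set \<Rightarrow> int list set" where
  "vmap M p = act M ` p"

definition L_orbit :: "int list set \<Rightarrow> int list set set" where
  "L_orbit p = {vmap M p | M. M \<in> Lset}"

definition proj :: "int list \<Rightarrow> complex mat" where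
  "proj x = (1 / of_int (ip x x)) \<cdot>\<^sub>m mat 8 8 (\<lambda>(i, j). of_int (x ! i * x ! j))"

end

theory Submission
  imports Defs
begin

text \<open>Up to sign, each \<open>\<sigma>\<^sub>M\<close> acts on the coordinates as a signed permutation
  (\<open>pauli_act\<close>), and \<open>L\<close> acts on roots through the group \<open>{I, X, Y, Z}\<^sup>3\<close> modulo signs,
  whose characters are given by anticommutation with a fixed Pauli string \<open>K\<close>.  The heart of the
  argument is that for roots \<open>x\<close>, \<open>y\<close> in two distinct \<open>L\<close>-orbits there is such a character
  \<open>\<lambda>\<^sub>K\<close> with \<open>\<langle>Px, Qy\<rangle> = 0\<close> iff \<open>[\<langle>x, y\<rangle> = 0] \<oplus> \<lambda>\<^sub>K(P) \<oplus> \<lambda>\<^sub>K(Q)\<close>; by equivariance it suffices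
  to check this on the 15 orbit representatives, which is done by evaluation.  Distinct vertices
  of \<open>G\<^sub>E\<^sub>8\<close> are at distance 1 if orthogonal and 2 otherwise (a common orthogonal root always
  exists, again certified by evaluation), and \<open>P\<^sub>a P\<^sub>b = 0\<close> iff \<open>\<langle>a, b\<rangle> = 0\<close>.  Hence
  \<open>d(k, l) = d(\<sigma>\<^sub>M k, \<sigma>\<^sub>N l)\<close> iff \<open>\<lambda>\<^sub>K(M) = \<lambda>\<^sub>K(N)\<close>, while
  \<open>P\<^sub>M\<^sub>w\<^sub>i P\<^sub>N\<^sub>w\<^sub>j = 0\<close> iff \<open>\<langle>Mw\<^sub>i, Nw\<^sub>j\<rangle> = 0\<close> iff \<open>[\<langle>w\<^sub>i, w\<^sub>j\<rangle> = 0] \<oplus> \<lambda>\<^sub>K(M) \<oplus> \<lambda>\<^sub>K(N)\<close>.\<close>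

subsection \<open>The Pauli action as a signed permutation\<close>

definition pauli_pair :: "nat \<Rightarrow> int \<Rightarrow> int \<Rightarrow> int \<times> int" where
  "pauli_pair m u v =
     (if m = 0 then (u, v) else if m = 1 then (v, u) else if m = 2 then (-v, u) else (u, -v))"

text \<open>\<open>pauli_bit0\<close>, \<open>pauli_bit1\<close>, \<open>pauli_bit2\<close> apply a Pauli matrix to the
  third, second and first tensor factor of \<open>\<real>\<^sup>2 \<otimes> \<real>\<^sup>2 \<otimes> \<real>\<^sup>2\<close>, i.e. to the pairs of
  coordinates whose indices differ in bit 0, 1 and 2 respectively.\<close>

fun pauli_bit0 :: "nat \<Rightarrow> int list \<Rightarrow> int list" where
  "pauli_bit0 m (a # b # r) = fst (pauli_pair m a b) # snd (pauli_pair m a b) # pauli_bit0 m r"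
| "pauli_bit0 m r = r"

fun pauli_bit1 :: "nat \<Rightarrow> int list \<Rightarrow> int list" where
  "pauli_bit1 m (a # b # c # d # r) =
     fst (pauli_pair m a c) # fst (pauli_pair m b d) #
     snd (pauli_pair m a c) # snd (pauli_pair m b d) # pauli_bit1 m r"
| "pauli_bit1 m r = r"

fun pauli_bit2 :: "nat \<Rightarrow> int list \<Rightarrow> int list" where
  "pauli_bit2 m (a0 # a1 # a2 # a3 # a4 # a5 # a6 # a7 # r) =
     [fst (pauli_pair m a0 a4), fst (pauli_pair m a1 a5),
      fst (pauli_pair m a2 a6), fst (pauli_pair m a3 a7),
      snd (pauli_pair m a0 a4), snd (pauli_pair m a1 a5),
      snd (pauli_pair m a2 a6), snd (pauli_pair m a3 a7)]"
| "pauli_bit2 m r = r"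

definition pauli_act :: "nat \<times> nat \<times> nat \<Rightarrow> int list \<Rightarrow> int list" where
  "pauli_act M x = (case M of (m1, m2, m3) \<Rightarrow> pauli_bit2 m1 (pauli_bit1 m2 (pauli_bit0 m3 x)))"

definition neg :: "int list \<Rightarrow> int list" where
  "neg x = map uminus x"

fun dot :: "int list \<Rightarrow> int list \<Rightarrow> int" where
  "dot (a # x) (b # y) = a * b + dot x y"
| "dot _ _ = 0"

lemma length_eq_8_iff:
  "length x = 8 \<longleftrightarrow> (\<exists>x0 x1 x2 x3 x4 x5 x6 x7. x = [x0, x1, x2, x3, x4, x5, x6, x7])"
  by (auto simp: length_Suc_conv numeral_eq_Suc)

lemma sum_lessThan_8: "(\<Sum>b<8. f b) = f 0 + f 1 + f 2 + f 3 + f 4 + f 5 + f 6 + f 7"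
  for f :: "nat \<Rightarrow> int"
  by (simp add: numeral_eq_Suc lessThan_Suc add_ac)

lemma ip_8:
  "ip [x0, x1, x2, x3, x4, x5, x6, x7] [y0, y1, y2, y3, y4, y5, y6, y7] =
     x0 * y0 + x1 * y1 + x2 * y2 + x3 * y3 + x4 * y4 + x5 * y5 + x6 * y6 + x7 * y7"
  by (simp add: ip_def sum_lessThan_8)

lemma ip_eq_dot: "length x = 8 \<Longrightarrow> length y = 8 \<Longrightarrow> ip x y = dot x y"
  by (auto simp: length_eq_8_iff ip_8)

lemma ip_commute: "ip u v = ip v u"
  by (simp add: ip_def mult.commute)

lemma ip_neg_left: "length u = 8 \<Longrightarrow> ip (neg u) v = - ip u v"
  by (simp add: ip_def neg_def sum_negf[symmetric])

lemma ip_neg_right: "length v = 8 \<Longrightarrow> ip u (neg v) = - ip u v"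
  by (simp add: ip_def neg_def sum_negf[symmetric])

lemma length_neg [simp]: "length (neg x) = length x"
  by (simp add: neg_def)

lemma Lset_iff: "(m1, m2, m3) \<in> Lset \<longleftrightarrow> m1 \<le> 3 \<and> m2 \<le> 3 \<and> m3 \<le> 3"
  by (auto simp: Lset_def)

lemma le_3_cases: "(m :: nat) \<le> 3 \<Longrightarrow> m = 0 \<or> m = 1 \<or> m = 2 \<or> m = 3"
  by arith

lemma nat_0_1_2_cases: "(m :: nat) = 0 \<or> m = 1 \<or> m = 2 \<or> m \<noteq> 0 \<and> m \<noteq> 1 \<and> m \<noteq> 2"
  by arith

lemma length_pauli_bit [simp]:
  "length x = 8 \<Longrightarrow> length (pauli_bit0 m x) = 8"
  "length x = 8 \<Longrightarrow> length (pauli_bit1 m x) = 8"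
  "length x = 8 \<Longrightarrow> length (pauli_bit2 m x) = 8"
  by (auto simp: length_eq_8_iff)

lemma length_pauli_act [simp]: "length x = 8 \<Longrightarrow> length (pauli_act M x) = 8"
  by (simp add: pauli_act_def split: prod.split)

lemma pauli_bit_neg:
  "length x = 8 \<Longrightarrow> pauli_bit0 m (neg x) = neg (pauli_bit0 m x)"
  "length x = 8 \<Longrightarrow> pauli_bit1 m (neg x) = neg (pauli_bit1 m x)"
  "length x = 8 \<Longrightarrow> pauli_bit2 m (neg x) = neg (pauli_bit2 m x)"
  by (auto simp: length_eq_8_iff neg_def pauli_pair_def)

lemma pauli_act_neg: "length x = 8 \<Longrightarrow> pauli_act M (neg x) = neg (pauli_act M x)"
  by (simp add: pauli_act_def pauli_bit_neg split: prod.split)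

lemma ip_pauli_bit:
  "length x = 8 \<Longrightarrow> length y = 8 \<Longrightarrow> ip (pauli_bit0 m x) (pauli_bit0 m y) = ip x y"
  "length x = 8 \<Longrightarrow> length y = 8 \<Longrightarrow> ip (pauli_bit1 m x) (pauli_bit1 m y) = ip x y"
  "length x = 8 \<Longrightarrow> length y = 8 \<Longrightarrow> ip (pauli_bit2 m x) (pauli_bit2 m y) = ip x y"
  by (auto simp: length_eq_8_iff ip_8 pauli_pair_def algebra_simps)

lemma ip_pauli_act: "length x = 8 \<Longrightarrow> length y = 8 \<Longrightarrow> ip (pauli_act M x) (pauli_act M y) = ip x y"
  by (simp add: pauli_act_def ip_pauli_bit split: prod.split)

lemma pauli_pair_eq:
  "m \<le> 3 \<Longrightarrow> pauli_pair m u v = (pauli m 0 0 * u + pauli m 0 1 * v, pauli m 1 0 * u + pauli m 1 1 * v)"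
  by (auto dest!: le_3_cases simp: pauli_pair_def pauli_def)

lemma act_eq_pauli_act:
  assumes "M \<in> Lset" "length x = 8"
  shows "act M x = pauli_act M x"
proof -
  obtain x0 x1 x2 x3 x4 x5 x6 x7 where x: "x = [x0, x1, x2, x3, x4, x5, x6, x7]"
    using assms(2) by (auto simp: length_eq_8_iff)
  obtain m1 m2 m3 where M: "M = (m1, m2, m3)" "m1 \<le> 3" "m2 \<le> 3" "m3 \<le> 3"
    using assms(1) by (cases M) (auto simp: Lset_iff)
  have upt_8: "[0..<8] = [0, 1, 2, 3, 4, 5, 6, 7 :: nat]"
    by (simp add: upt_rec)
  show ?thesis
    using M(2-4) unfolding x M(1) act_def upt_8
    by (simp add: sum_lessThan_8 kron3_def pauli_act_def pauli_pair_eq algebra_simps)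
qed

lemma act_neg: "length x = 8 \<Longrightarrow> act M (neg x) = neg (act M x)"
  by (simp add: act_def neg_def sum_negf[symmetric])

lemma vert_eq_iff: "vert u = vert v \<longleftrightarrow> u = v \<or> u = neg v"
  by (auto simp: vert_def neg_def doubleton_eq_iff comp_def)

lemma vert_neg [simp]: "vert (neg u) = vert u"
  by (simp add: vert_eq_iff)

lemma ip_vert_cong_left: "vert u = vert u' \<Longrightarrow> length u' = 8 \<Longrightarrow> ip u v = 0 \<longleftrightarrow> ip u' v = 0"
  by (auto simp: vert_eq_iff ip_neg_left)

lemma ip_vert_cong_right: "vert v = vert v' \<Longrightarrow> length v' = 8 \<Longrightarrow> ip u v = 0 \<longleftrightarrow> ip u v' = 0"
  by (auto simp: vert_eq_iff ip_neg_right)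

lemma vert_pauli_act_cong:
  "vert u = vert v \<Longrightarrow> length v = 8 \<Longrightarrow> vert (pauli_act M u) = vert (pauli_act M v)"
  by (auto simp: vert_eq_iff pauli_act_neg)

lemma vmap_vert: "M \<in> Lset \<Longrightarrow> length x = 8 \<Longrightarrow> vmap M (vert x) = vert (pauli_act M x)"
  by (simp add: vmap_def vert_def act_neg[unfolded neg_def] act_eq_pauli_act
      pauli_act_neg[unfolded neg_def])

subsection \<open>The group law of \<open>L\<close>\<close>

text \<open>Products and commutation of Pauli matrices modulo sign, in the coding of \<^const>\<open>pauli\<close>:
  \<open>{I, X, Y, Z}\<close> modulo \<open>\<plusminus>1\<close> is the Klein four-group, and two of its elements anticommute
  iff they are distinct and both non-trivial.\<close>

definition pauli_mult :: "nat \<Rightarrow> nat \<Rightarrow> nat" where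
  "pauli_mult m n = (if m = 0 then n else if n = 0 then m else if m = n then 0 else 6 - m - n)"

definition pauli_mult3 :: "nat \<times> nat \<times> nat \<Rightarrow> nat \<times> nat \<times> nat \<Rightarrow> nat \<times> nat \<times> nat" where
  "pauli_mult3 M N = (case M of (m1, m2, m3) \<Rightarrow> case N of (n1, n2, n3) \<Rightarrow>
     (pauli_mult m1 n1, pauli_mult m2 n2, pauli_mult m3 n3))"

definition pauli_anticomm :: "nat \<Rightarrow> nat \<Rightarrow> bool" where
  "pauli_anticomm k m \<longleftrightarrow> k \<noteq> 0 \<and> m \<noteq> 0 \<and> m \<noteq> k"

definition pauli_anticomm3 :: "nat \<times> nat \<times> nat \<Rightarrow> nat \<times> nat \<times> nat \<Rightarrow> bool" where
  "pauli_anticomm3 K P = (case K of (k1, k2, k3) \<Rightarrow> case P of (p1, p2, p3) \<Rightarrow>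
     pauli_anticomm k1 p1 \<noteq> (pauli_anticomm k2 p2 \<noteq> pauli_anticomm k3 p3))"

lemma pauli_bit_commute:
  "length x = 8 \<Longrightarrow> pauli_bit0 m (pauli_bit1 n x) = pauli_bit1 n (pauli_bit0 m x)"
  "length x = 8 \<Longrightarrow> pauli_bit0 m (pauli_bit2 n x) = pauli_bit2 n (pauli_bit0 m x)"
  "length x = 8 \<Longrightarrow> pauli_bit1 m (pauli_bit2 n x) = pauli_bit2 n (pauli_bit1 m x)"
  using nat_0_1_2_cases[of m] nat_0_1_2_cases[of n] by (auto simp: length_eq_8_iff pauli_pair_def)

lemma vert_pauli_bit_mult:
  assumes u: "vert u = vert x" and x: "length x = 8" and "m \<le> 3" "n \<le> 3"
  shows "vert (pauli_bit0 m (pauli_bit0 n u)) = vert (pauli_bit0 (pauli_mult m n) x)"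
    and "vert (pauli_bit1 m (pauli_bit1 n u)) = vert (pauli_bit1 (pauli_mult m n) x)"
    and "vert (pauli_bit2 m (pauli_bit2 n u)) = vert (pauli_bit2 (pauli_mult m n) x)"
proof -
  have u_cases: "u = x \<or> u = neg x"
    using u by (simp add: vert_eq_iff)
  obtain x0 x1 x2 x3 x4 x5 x6 x7 where x_eq: "x = [x0, x1, x2, x3, x4, x5, x6, x7]"
    using x by (auto simp: length_eq_8_iff)
  have "vert (pauli_bit0 m (pauli_bit0 n x)) = vert (pauli_bit0 (pauli_mult m n) x)"
    and "vert (pauli_bit1 m (pauli_bit1 n x)) = vert (pauli_bit1 (pauli_mult m n) x)"
    and "vert (pauli_bit2 m (pauli_bit2 n x)) = vert (pauli_bit2 (pauli_mult m n) x)"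
    using le_3_cases[OF assms(3)] le_3_cases[OF assms(4)]
    by (safe; simp add: x_eq vert_def insert_commute pauli_pair_def pauli_mult_def)+
  then show "vert (pauli_bit0 m (pauli_bit0 n u)) = vert (pauli_bit0 (pauli_mult m n) x)"
    and "vert (pauli_bit1 m (pauli_bit1 n u)) = vert (pauli_bit1 (pauli_mult m n) x)"
    and "vert (pauli_bit2 m (pauli_bit2 n u)) = vert (pauli_bit2 (pauli_mult m n) x)"
    using u_cases x by (auto simp: pauli_bit_neg)
qed

lemma vert_pauli_act_mult:
  assumes M: "M \<in> Lset" and N: "N \<in> Lset" and x: "length x = 8"
  shows "vert (pauli_act M (pauli_act N x)) = vert (pauli_act (pauli_mult3 M N) x)"
proof -
  obtain m1 m2 m3 n1 n2 n3 where MN: "M = (m1, m2, m3)" "N = (n1, n2, n3)"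
    by (cases M, cases N) auto
  have le: "m1 \<le> 3" "m2 \<le> 3" "m3 \<le> 3" "n1 \<le> 3" "n2 \<le> 3" "n3 \<le> 3"
    using M N by (simp_all add: MN Lset_iff)
  have "vert (pauli_bit0 m3 (pauli_bit0 n3 x)) = vert (pauli_bit0 (pauli_mult m3 n3) x)"
    using x le by (intro vert_pauli_bit_mult(1)) simp_all
  then have "vert (pauli_bit1 m2 (pauli_bit1 n2 (pauli_bit0 m3 (pauli_bit0 n3 x)))) =
      vert (pauli_bit1 (pauli_mult m2 n2) (pauli_bit0 (pauli_mult m3 n3) x))"
    using x le by (intro vert_pauli_bit_mult(2)) simp_all
  then have "vert (pauli_bit2 m1 (pauli_bit2 n1 (pauli_bit1 m2 (pauli_bit1 n2 (pauli_bit0 m3 (pauli_bit0 n3 x)))))) =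
      vert (pauli_bit2 (pauli_mult m1 n1) (pauli_bit1 (pauli_mult m2 n2) (pauli_bit0 (pauli_mult m3 n3) x)))"
    using x le by (intro vert_pauli_bit_mult(3)) simp_all
  then show ?thesis
    using x by (simp add: MN pauli_act_def pauli_mult3_def pauli_bit_commute)
qed

lemma pauli_act_id: "length x = 8 \<Longrightarrow> pauli_act (0, 0, 0) x = x"
  by (auto simp: length_eq_8_iff pauli_act_def pauli_pair_def)

lemma pauli_bit2_id: "length x = 8 \<Longrightarrow> pauli_bit2 0 x = x"
  by (auto simp: length_eq_8_iff pauli_pair_def)

lemma pauli_mult_le_3: "m \<le> 3 \<Longrightarrow> n \<le> 3 \<Longrightarrow> pauli_mult m n \<le> 3"
  by (auto dest!: le_3_cases simp: pauli_mult_def)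

lemma pauli_mult_cancel: "p \<le> 3 \<Longrightarrow> c \<le> 3 \<Longrightarrow> pauli_mult (pauli_mult p c) c = p"
  by (auto dest!: le_3_cases simp: pauli_mult_def)

lemma pauli_anticomm_mult:
  "k \<le> 3 \<Longrightarrow> m \<le> 3 \<Longrightarrow> n \<le> 3 \<Longrightarrow>
     pauli_anticomm k (pauli_mult m n) \<longleftrightarrow> pauli_anticomm k m \<noteq> pauli_anticomm k n"
  by (auto dest!: le_3_cases simp: pauli_anticomm_def pauli_mult_def)

lemma pauli_mult3_in_Lset: "M \<in> Lset \<Longrightarrow> N \<in> Lset \<Longrightarrow> pauli_mult3 M N \<in> Lset"
  by (cases M; cases N) (simp add: pauli_mult3_def Lset_iff pauli_mult_le_3)

lemma pauli_mult3_self: "pauli_mult3 M M = (0, 0, 0)"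
  by (cases M) (simp add: pauli_mult3_def pauli_mult_def)

lemma pauli_mult3_cancel: "P \<in> Lset \<Longrightarrow> C \<in> Lset \<Longrightarrow> pauli_mult3 (pauli_mult3 P C) C = P"
  by (cases P; cases C) (simp add: pauli_mult3_def Lset_iff pauli_mult_cancel)

lemma pauli_anticomm3_mult:
  "K \<in> Lset \<Longrightarrow> P \<in> Lset \<Longrightarrow> Q \<in> Lset \<Longrightarrow>
     pauli_anticomm3 K (pauli_mult3 P Q) \<longleftrightarrow> pauli_anticomm3 K P \<noteq> pauli_anticomm3 K Q"
  by (cases K; cases P; cases Q)
    (auto simp: Lset_iff pauli_anticomm3_def pauli_mult3_def pauli_anticomm_mult)

lemma vert_pauli_act_twice: "M \<in> Lset \<Longrightarrow> length x = 8 \<Longrightarrow> vert (pauli_act M (pauli_act M x)) = vert x"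
  by (simp add: vert_pauli_act_mult pauli_mult3_self pauli_act_id)

lemma ip_pauli_act_swap:
  assumes "M \<in> Lset" "length x = 8" "length y = 8"
  shows "ip (pauli_act M x) y = 0 \<longleftrightarrow> ip x (pauli_act M y) = 0"
proof -
  have "ip (pauli_act M x) y = ip (pauli_act M (pauli_act M x)) (pauli_act M y)"
    using assms by (simp add: ip_pauli_act)
  then show ?thesis
    using ip_vert_cong_left[OF vert_pauli_act_twice] assms by simp
qed

lemma ip_pauli_bit2_swap:
  assumes "m \<le> 3" "length x = 8" "length y = 8"
  shows "ip (pauli_bit2 m x) y = 0 \<longleftrightarrow> ip x (pauli_bit2 m y) = 0"
proof -
  have "pauli_mult m m = 0"
    by (simp add: pauli_mult_def)
  then have twice: "vert (pauli_bit2 m (pauli_bit2 m x)) = vert x"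
    using vert_pauli_bit_mult(3)[OF refl assms(2,1,1)] assms(2) by (simp add: pauli_bit2_id)
  have "ip (pauli_bit2 m x) y = ip (pauli_bit2 m (pauli_bit2 m x)) (pauli_bit2 m y)"
    using assms by (simp add: ip_pauli_bit)
  then show ?thesis
    using ip_vert_cong_left[OF twice, of "pauli_bit2 m y"] assms(2) by simp
qed

lemma e8_root_length: "x \<in> e8_roots \<Longrightarrow> length x = 8"
  by (auto simp: e8_roots_def)

lemma length_filter_conv_sum_list: "length (filter P xs) = (\<Sum>a\<leftarrow>xs. of_bool (P a))"
  by (induct xs) auto

definition signed_rearrangement :: "int list \<Rightarrow> int list \<Rightarrow> bool" where
  "signed_rearrangement y x \<longleftrightarrow> length y = length x \<and> set y \<subseteq> set x \<union> uminus ` set x \<and>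
     (\<Sum>a\<leftarrow>y. of_bool (a \<noteq> 0) :: nat) = (\<Sum>a\<leftarrow>x. of_bool (a \<noteq> 0)) \<and> prod_list y = prod_list x"

lemma e8_roots_signed_rearrangement:
  assumes x: "x \<in> e8_roots" and y: "signed_rearrangement y x"
  shows "y \<in> e8_roots"
proof -
  have y_set: "set y \<subseteq> set x \<union> uminus ` set x"
    using y by (simp add: signed_rearrangement_def)
  have "set y \<subseteq> {-1, 0, 1}" if "set x \<subseteq> {-1, 0, 1}"
  proof -
    have "uminus ` set x \<subseteq> uminus ` {-1, 0, 1}"
      using that by (rule image_mono)
    moreover have "uminus ` {-1, 0, 1} = {-1, 0, 1 :: int}"
      by auto
    ultimately show ?thesis
      using y_set that by blast
  qed
  moreover have "set y \<subseteq> {-1, 1}" if "set x \<subseteq> {-1, 1}"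
  proof -
    have "uminus ` set x \<subseteq> uminus ` {-1, 1}"
      using that by (rule image_mono)
    moreover have "uminus ` {-1, 1} = {-1, 1 :: int}"
      by auto
    ultimately show ?thesis
      using y_set that by blast
  qed
  ultimately show ?thesis
    using x y unfolding e8_roots_def signed_rearrangement_def length_filter_conv_sum_list by auto
qed

lemma signed_rearrangement_pauli_bit:
  assumes "length x = 8"
  shows "signed_rearrangement (pauli_bit0 m x) x"
    and "signed_rearrangement (pauli_bit1 m x) x"
    and "signed_rearrangement (pauli_bit2 m x) x"
proof -
  obtain x0 x1 x2 x3 x4 x5 x6 x7 where x: "x = [x0, x1, x2, x3, x4, x5, x6, x7]"
    using assms by (auto simp: length_eq_8_iff)
  show "signed_rearrangement (pauli_bit0 m x) x"
    and "signed_rearrangement (pauli_bit1 m x) x"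
    and "signed_rearrangement (pauli_bit2 m x) x"
    using nat_0_1_2_cases[of m] unfolding x signed_rearrangement_def
    by (elim disjE; simp add: pauli_pair_def add_ac mult_ac)+
qed

lemma pauli_act_root:
  assumes "x \<in> e8_roots"
  shows "pauli_act M x \<in> e8_roots"
proof -
  have bits: "pauli_bit0 m x \<in> e8_roots" "pauli_bit1 m x \<in> e8_roots" "pauli_bit2 m x \<in> e8_roots"
    if "x \<in> e8_roots" for m x
    using e8_roots_signed_rearrangement[OF that]
      signed_rearrangement_pauli_bit[OF e8_root_length[OF that]] by blast+
  show ?thesis
    using assms by (simp add: pauli_act_def bits split: prod.split)
qed

lemma ip_self_root: "x \<in> e8_roots \<Longrightarrow> ip x x \<noteq> 0"
  by (auto simp: e8_roots_def length_eq_8_iff ip_8 add_nonneg_eq_0_iff)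

lemma L_orbit_vert:
  assumes "length x = 8"
  shows "L_orbit (vert x) = (\<lambda>M. vert (pauli_act M x)) ` Lset"
proof -
  have "L_orbit (vert x) = (\<lambda>M. vmap M (vert x)) ` Lset"
    unfolding L_orbit_def by blast
  also have "\<dots> = (\<lambda>M. vert (pauli_act M x)) ` Lset"
    using assms by (intro image_cong) (simp_all add: vmap_vert)
  finally show ?thesis .
qed

lemma vert_in_L_orbit: "length x = 8 \<Longrightarrow> vert x \<in> L_orbit (vert x)"
  unfolding L_orbit_vert
  by (rule rev_image_eqI[of "(0, 0, 0)"]) (simp_all add: Lset_iff pauli_act_id)

lemma pauli_mult3_right_image:
  assumes "C \<in> Lset"
  shows "(\<lambda>M. pauli_mult3 M C) ` Lset = Lset"
proof
  show "(\<lambda>M. pauli_mult3 M C) ` Lset \<subseteq> Lset"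
    using assms pauli_mult3_in_Lset by blast
  show "Lset \<subseteq> (\<lambda>M. pauli_mult3 M C) ` Lset"
  proof
    fix P
    assume "P \<in> Lset"
    then show "P \<in> (\<lambda>M. pauli_mult3 M C) ` Lset"
      using assms by (intro rev_image_eqI[of "pauli_mult3 P C"])
        (simp_all add: pauli_mult3_in_Lset pauli_mult3_cancel)
  qed
qed

lemma L_orbit_eq:
  assumes x: "length x = 8" and q: "q \<in> L_orbit (vert x)"
  shows "L_orbit q = L_orbit (vert x)"
proof -
  obtain C where C: "C \<in> Lset" "q = vert (pauli_act C x)"
    using q x by (auto simp: L_orbit_vert)
  have "L_orbit q = (\<lambda>M. vert (pauli_act M (pauli_act C x))) ` Lset"
    using C x by (simp add: L_orbit_vert)
  also have "\<dots> = (\<lambda>M. vert (pauli_act (pauli_mult3 M C) x)) ` Lset"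
    using C x by (simp add: vert_pauli_act_mult cong: image_cong)
  also have "\<dots> = (\<lambda>M. vert (pauli_act M x)) ` (\<lambda>M. pauli_mult3 M C) ` Lset"
    by (simp add: image_image)
  finally show ?thesis
    using C x by (simp add: pauli_mult3_right_image L_orbit_vert)
qed

lemma e8_adj_vert_iff:
  assumes "u \<in> e8_roots" "v \<in> e8_roots"
  shows "e8_adj (vert u) (vert v) \<longleftrightarrow> ip u v = 0"
  using assms e8_root_length[OF assms(1)] e8_root_length[OF assms(2)]
  by (auto simp: e8_adj_def e8_vertices_def vert_def ip_neg_left[unfolded neg_def]
      ip_neg_right[unfolded neg_def])

lemma proj_mult_proj_entry:
  assumes "i < 8" "j < 8"
  shows "(proj a * proj b) $$ (i, j) =
    of_int (a ! i) * of_int (b ! j) * of_int (ip a b) / (of_int (ip a a) * of_int (ip b b))"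
proof -
  let ?c = "of_int (a ! i) * of_int (b ! j) / (of_int (ip a a) * of_int (ip b b)) :: complex"
  have "(proj a * proj b) $$ (i, j) =
      (\<Sum>k\<in>{0..<8}. (1 / of_int (ip a a) * of_int (a ! i * a ! k)) * (1 / of_int (ip b b) * of_int (b ! k * b ! j)))"
    using assms by (simp add: proj_def scalar_prod_def)
  also have "\<dots> = (\<Sum>k\<in>{0..<8}. ?c * of_int (a ! k * b ! k))"
    by (rule sum.cong) (simp_all add: field_simps)
  also have "\<dots> = ?c * (\<Sum>k\<in>{0..<8}. of_int (a ! k * b ! k))"
    by (rule sum_distrib_left[symmetric])
  also have "(\<Sum>k\<in>{0..<8}. of_int (a ! k * b ! k)) = (of_int (ip a b) :: complex)"
    by (simp only: ip_def atLeast0LessThan of_int_sum)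
  finally show ?thesis
    by simp
qed

lemma proj_mult_proj_eq_0_iff:
  assumes "ip a a \<noteq> 0" "ip b b \<noteq> 0"
  shows "proj a * proj b = 0\<^sub>m 8 8 \<longleftrightarrow> ip a b = 0"
proof
  have nonzero_entry: "\<exists>i<8. v ! i \<noteq> 0" if "ip v v \<noteq> 0" for v
  proof (rule ccontr)
    assume "\<not> (\<exists>i<8. v ! i \<noteq> 0)"
    then have "ip v v = 0"
      by (simp add: ip_def)
    with that show False
      by simp
  qed
  obtain i j where ij: "i < 8" "a ! i \<noteq> 0" "j < 8" "b ! j \<noteq> 0"
    using nonzero_entry assms by blast
  assume "proj a * proj b = 0\<^sub>m 8 8"
  then have "(proj a * proj b) $$ (i, j) = 0"
    using ij by simp
  then show "ip a b = 0"
    using ij assms by (simp add: proj_mult_proj_entry)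
next
  assume "ip a b = 0"
  then show "proj a * proj b = 0\<^sub>m 8 8"
  proof (intro eq_matI)
    fix i j
    assume "i < dim_row (0\<^sub>m 8 8 :: complex mat)" "j < dim_col (0\<^sub>m 8 8 :: complex mat)"
    with \<open>ip a b = 0\<close> show "(proj a * proj b) $$ (i, j) = 0\<^sub>m 8 8 $$ (i, j)"
      by (simp add: proj_mult_proj_entry)
  qed (simp_all add: proj_def)
qed

subsection \<open>Enumeration of the roots up to sign\<close>

text \<open>\<open>signed_weight_lists n k\<close> enumerates the lists in \<open>{-1, 0, 1}\<^sup>n\<close> with exactly \<open>k\<close>
  non-zero entries, \<open>signed_weight_lists_pos n k\<close> those among them whose first non-zero entry
  is \<open>1\<close>.  Thus \<open>positive_roots\<close> contains exactly one of \<open>\<plusminus>x\<close> for every root \<open>x\<close>.\<close>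

fun signed_weight_lists :: "nat \<Rightarrow> nat \<Rightarrow> int list list" where
  "signed_weight_lists 0 0 = [[]]"
| "signed_weight_lists 0 (Suc k) = []"
| "signed_weight_lists (Suc n) 0 = map (Cons 0) (signed_weight_lists n 0)"
| "signed_weight_lists (Suc n) (Suc k) =
     map (Cons 0) (signed_weight_lists n (Suc k)) @ map (Cons 1) (signed_weight_lists n k)
       @ map (Cons (-1)) (signed_weight_lists n k)"

fun signed_weight_lists_pos :: "nat \<Rightarrow> nat \<Rightarrow> int list list" where
  "signed_weight_lists_pos 0 k = []"
| "signed_weight_lists_pos (Suc n) 0 = []"
| "signed_weight_lists_pos (Suc n) (Suc k) =
     map (Cons 0) (signed_weight_lists_pos n (Suc k)) @ map (Cons 1) (signed_weight_lists n k)"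

fun sign_lists :: "nat \<Rightarrow> int list list" where
  "sign_lists 0 = [[]]"
| "sign_lists (Suc n) = map (Cons 1) (sign_lists n) @ map (Cons (-1)) (sign_lists n)"

definition positive_roots :: "int list list" where
  "positive_roots =
     signed_weight_lists_pos 8 2 @ filter (\<lambda>x. prod_list x = 1) (map (Cons 1) (sign_lists 7))"

lemma length_filter_nonzero_neg:
  "length (filter (\<lambda>a. a \<noteq> 0) (neg xs)) = length (filter (\<lambda>a. a \<noteq> 0) xs)"
  by (induct xs) (simp_all add: neg_def)

lemma prod_list_neg: "prod_list (neg x) = (-1) ^ length x * prod_list x"
  by (induct x) (simp_all add: neg_def)

lemma in_signed_weight_lists:
  "set x \<subseteq> {-1, 0, 1} \<Longrightarrow> length (filter (\<lambda>a. a \<noteq> 0) x) = k \<Longrightarrow>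
     x \<in> set (signed_weight_lists (length x) k)"
proof (induct x arbitrary: k)
  case (Cons a xs)
  then have xs: "set xs \<subseteq> {-1, 0, 1}" by simp
  consider "a = 0" | "a = 1" | "a = -1"
    using Cons.prems(1) by auto
  then show ?case
  proof cases
    case 1
    with Cons.prems(2) have "xs \<in> set (signed_weight_lists (length xs) k)"
      using Cons.hyps xs by simp
    with 1 show ?thesis
      by (cases k) auto
  next
    case 2
    with Cons.prems(2) obtain k' where "k = Suc k'" "length (filter (\<lambda>a. a \<noteq> 0) xs) = k'"
      by auto
    with 2 show ?thesis
      using Cons.hyps xs by auto
  next
    case 3
    with Cons.prems(2) obtain k' where "k = Suc k'" "length (filter (\<lambda>a. a \<noteq> 0) xs) = k'"
      by auto
    with 3 show ?thesis
      using Cons.hyps xs by auto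
  qed
qed simp

lemma in_signed_weight_lists_pos:
  "set x \<subseteq> {-1, 0, 1} \<Longrightarrow> length (filter (\<lambda>a. a \<noteq> 0) x) = Suc k \<Longrightarrow>
     x \<in> set (signed_weight_lists_pos (length x) (Suc k)) \<or>
     neg x \<in> set (signed_weight_lists_pos (length x) (Suc k))"
proof (induct x)
  case (Cons a xs)
  then have xs: "set xs \<subseteq> {-1, 0, 1}" "set (neg xs) \<subseteq> {-1, 0, 1}"
    by (auto simp: neg_def)
  consider "a = 0" | "a = 1" | "a = -1"
    using Cons.prems(1) by auto
  then show ?case
  proof cases
    case 1
    then show ?thesis
      using Cons xs by (auto simp: neg_def)
  next
    case 2
    then show ?thesis
      using Cons.prems(2) in_signed_weight_lists[OF xs(1)] by auto
  next
    case 3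
    with Cons.prems(2) have "length (filter (\<lambda>a. a \<noteq> 0) (neg xs)) = k"
      by (simp add: length_filter_nonzero_neg)
    then have "neg xs \<in> set (signed_weight_lists (length (neg xs)) k)"
      by (rule in_signed_weight_lists[OF xs(2)])
    with 3 show ?thesis
      by (auto simp: neg_def)
  qed
qed simp

lemma in_sign_lists: "set x \<subseteq> {-1, 1} \<Longrightarrow> x \<in> set (sign_lists (length x))"
  by (induct x) auto

lemma e8_roots_positive:
  assumes "x \<in> e8_roots"
  shows "x \<in> set positive_roots \<or> neg x \<in> set positive_roots"
proof (cases "set x \<subseteq> {-1, 0, 1} \<and> length (filter (\<lambda>a. a \<noteq> 0) x) = 2")
  case True
  then show ?thesis
    using in_signed_weight_lists_pos[of x 1] e8_root_length[OF assms]
    by (auto simp: positive_roots_def numeral_2_eq_2)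
next
  case False
  then have x: "length x = 8" "set x \<subseteq> {-1, 1}" "prod_list x = 1"
    using assms by (auto simp: e8_roots_def)
  then obtain a xs where a_xs: "x = a # xs" "length xs = 7" "a = 1 \<or> a = -1" "set xs \<subseteq> {-1, 1}"
    by (cases x) auto
  then have "set (neg xs) \<subseteq> {-1, 1}"
    by (auto simp: neg_def)
  then have "xs \<in> set (sign_lists 7)" "neg xs \<in> set (sign_lists 7)"
    using in_sign_lists a_xs by fastforce+
  moreover have "prod_list (neg x) = 1"
    using x by (simp add: prod_list_neg)
  ultimately show ?thesis
    using a_xs x by (auto simp: positive_roots_def neg_def)
qed

text \<open>The following tables are certificates found by a computer search and checked below by
  evaluation.  \<open>orbit_reps ! i\<close> (\<open>i < 15\<close>) is the representative \<open>w\<^sub>i\<close> of the \<open>i\<close>-th orbit;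
  the \<open>n\<close>-th entry \<open>(i, C)\<close> of \<open>orbit_witnesses\<close> says \<open>positive_roots ! n = \<plusminus>C w\<^sub>i\<close>; row \<open>i\<close>
  of \<open>char_table\<close> lists the characters \<open>K\<close> of the pairs \<open>(w\<^sub>i, w\<^sub>j)\<close>, \<open>j > i\<close>; and every root
  that is neither orthogonal to \<open>w\<^sub>i\<close> nor equal to \<open>\<plusminus>w\<^sub>i\<close> is orthogonal to one of the roots
  \<open>orthogonal_candidates ! i\<close>, which are themselves orthogonal to \<open>w\<^sub>i\<close>.\<close>

definition orbit_reps :: "int list list" where
  "orbit_reps =
    [[0,0,0,0,0,0,1,1], [0,0,0,0,0,1,0,1], [0,0,0,0,0,1,1,0],
     [0,0,0,1,0,0,0,1], [0,0,0,1,0,0,1,0], [0,0,0,1,0,1,0,0],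
     [0,0,0,1,1,0,0,0], [1,1,1,1,1,1,1,1], [1,1,1,1,1,1,-1,-1],
     [1,1,1,1,1,-1,1,-1], [1,1,1,1,1,-1,-1,1], [1,1,1,-1,1,1,1,-1],
     [1,1,1,-1,1,1,-1,1], [1,1,1,-1,1,-1,1,1], [1,1,1,-1,1,-1,-1,-1]]"

definition orbit_witnesses :: "(nat \<times> nat \<times> nat \<times> nat) list" where
  "orbit_witnesses =
    [(0, (0, 0, 0)), (0, (0, 0, 2)), (1, (0, 0, 0)), (1, (0, 2, 0)), (2, (0, 0, 0)), (2, (0, 0, 3)),
     (2, (0, 0, 1)), (2, (0, 0, 2)), (1, (0, 0, 1)), (1, (0, 2, 1)), (0, (0, 1, 0)), (0, (0, 1, 2)),
     (3, (0, 0, 0)), (3, (2, 0, 0)), (4, (0, 0, 0)), (4, (0, 0, 3)), (5, (0, 0, 0)), (5, (0, 3, 0)),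
     (6, (0, 0, 0)), (6, (0, 0, 3)), (4, (0, 0, 1)), (4, (0, 0, 2)), (3, (0, 0, 1)), (3, (2, 0, 1)),
     (6, (0, 0, 1)), (6, (0, 0, 2)), (5, (0, 0, 1)), (5, (0, 3, 1)), (0, (1, 0, 0)), (0, (1, 0, 2)),
     (5, (0, 1, 0)), (5, (0, 2, 0)), (6, (0, 1, 0)), (6, (0, 1, 3)), (3, (0, 1, 0)), (3, (2, 1, 0)),
     (4, (0, 1, 0)), (4, (0, 1, 3)), (1, (1, 0, 0)), (1, (1, 2, 0)), (2, (1, 0, 0)), (2, (1, 0, 3)),
     (6, (0, 1, 1)), (6, (0, 1, 2)), (5, (0, 1, 1)), (5, (0, 2, 1)), (4, (0, 1, 1)), (4, (0, 1, 2)),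
     (3, (0, 1, 1)), (3, (2, 1, 1)), (2, (1, 0, 1)), (2, (1, 0, 2)), (1, (1, 0, 1)), (1, (1, 2, 1)),
     (0, (1, 1, 0)), (0, (1, 1, 2)), (7, (0, 0, 0)), (8, (0, 0, 0)), (9, (0, 0, 0)), (10, (0, 0, 0)),
     (10, (0, 0, 1)), (9, (0, 0, 1)), (8, (0, 1, 0)), (7, (2, 0, 0)), (11, (0, 0, 0)), (12, (0, 0, 0)),
     (13, (0, 0, 0)), (14, (0, 0, 0)), (14, (0, 1, 3)), (13, (0, 2, 2)), (12, (0, 1, 3)), (11, (2, 0, 0)),
     (12, (0, 0, 1)), (11, (0, 0, 1)), (14, (0, 1, 2)), (13, (0, 2, 3)), (13, (0, 0, 1)), (14, (0, 0, 1)),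
     (11, (2, 0, 1)), (12, (0, 1, 2)), (8, (0, 3, 0)), (7, (0, 2, 0)), (10, (0, 2, 1)), (9, (0, 2, 0)),
     (9, (0, 2, 1)), (10, (0, 2, 0)), (7, (2, 2, 0)), (8, (0, 2, 0)), (13, (0, 0, 3)), (14, (0, 0, 3)),
     (11, (0, 0, 3)), (12, (0, 0, 3)), (12, (0, 1, 0)), (11, (2, 0, 3)), (14, (0, 1, 0)), (13, (0, 2, 1)),
     (9, (0, 0, 3)), (10, (0, 0, 3)), (7, (0, 0, 2)), (8, (0, 0, 2)), (8, (0, 1, 2)), (7, (2, 0, 2)),
     (10, (0, 0, 2)), (9, (0, 0, 2)), (10, (0, 2, 2)), (9, (0, 2, 3)), (8, (0, 3, 2)), (7, (0, 2, 2)),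
     (7, (2, 2, 2)), (8, (0, 2, 2)), (9, (0, 2, 2)), (10, (0, 2, 3)), (14, (0, 1, 1)), (13, (0, 2, 0)),
     (12, (0, 0, 2)), (11, (0, 0, 2)), (11, (2, 0, 2)), (12, (0, 1, 1)), (13, (0, 0, 2)), (14, (0, 0, 2))]"

definition char_table :: "(nat \<times> nat \<times> nat) list list" where
  "char_table =
    [[(3, 0, 0), (3, 0, 0), (0, 3, 0), (0, 3, 0), (3, 3, 0), (3, 3, 0), (0, 0, 1), (0, 0, 1),
      (3, 0, 1), (3, 0, 1), (0, 3, 1), (0, 3, 1), (3, 3, 1), (3, 3, 1)],
     [(3, 0, 0), (0, 0, 3), (3, 0, 3), (0, 0, 3), (3, 0, 3), (0, 1, 0), (3, 1, 0), (0, 1, 0),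
      (3, 1, 0), (0, 1, 3), (3, 1, 3), (0, 1, 3), (3, 1, 3)],
     [(0, 3, 3), (3, 3, 3), (3, 3, 3), (0, 3, 3), (0, 1, 1), (3, 1, 1), (3, 1, 1), (0, 1, 1),
      (0, 2, 2), (3, 2, 2), (3, 2, 2), (0, 2, 2)],
     [(0, 3, 0), (0, 0, 3), (0, 3, 3), (1, 0, 0), (1, 3, 0), (1, 0, 3), (1, 3, 3), (1, 0, 0),
      (1, 3, 0), (1, 0, 3), (1, 3, 3)],
     [(3, 3, 3), (3, 0, 3), (1, 0, 1), (1, 3, 1), (2, 0, 2), (2, 3, 2), (1, 3, 1), (1, 0, 1),
      (2, 3, 2), (2, 0, 2)],
     [(3, 3, 0), (1, 1, 0), (2, 2, 0), (1, 1, 3), (2, 2, 3), (1, 1, 3), (2, 2, 3), (1, 1, 0),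
      (2, 2, 0)],
     [(1, 1, 1), (2, 2, 1), (2, 1, 2), (1, 2, 2), (1, 2, 2), (2, 1, 2), (2, 2, 1), (1, 1, 1)],
     [(0, 0, 1), (0, 1, 0), (0, 1, 1), (1, 0, 0), (1, 0, 1), (1, 1, 0), (1, 1, 1)],
     [(3, 1, 1), (3, 1, 0), (1, 3, 1), (1, 3, 0), (2, 2, 1), (2, 2, 0)],
     [(3, 0, 1), (1, 1, 3), (2, 1, 2), (1, 0, 3), (2, 0, 2)],
     [(1, 2, 2), (2, 2, 3), (2, 3, 2), (1, 3, 3)],
     [(0, 3, 1), (0, 1, 3), (0, 2, 2)],
     [(3, 2, 2), (3, 1, 3)],
     [(3, 3, 1)],
     []]"

definition orthogonal_candidates :: "int list list list" where
  "orthogonal_candidates =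
    [[[1,1,0,0,0,0,0,0], [1,-1,0,0,0,0,0,0], [0,0,1,1,0,0,0,0]],
     [[1,1,0,0,0,0,0,0], [1,-1,0,0,0,0,0,0], [0,0,1,1,0,0,0,0]],
     [[1,1,0,0,0,0,0,0], [1,-1,0,0,0,0,0,0], [0,0,1,1,0,0,0,0]],
     [[1,1,0,0,0,0,0,0], [1,-1,0,0,0,0,0,0], [0,0,1,0,1,0,0,0]],
     [[1,1,0,0,0,0,0,0], [1,-1,0,0,0,0,0,0], [0,0,1,0,1,0,0,0]],
     [[1,1,0,0,0,0,0,0], [1,-1,0,0,0,0,0,0], [0,0,1,0,1,0,0,0]],
     [[1,1,0,0,0,0,0,0], [1,-1,0,0,0,0,0,0], [0,0,1,0,0,1,0,0]],
     [[1,-1,0,0,0,0,0,0], [0,0,1,-1,0,0,0,0], [0,0,0,0,1,-1,0,0]],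
     [[1,-1,0,0,0,0,0,0], [0,0,1,-1,0,0,0,0], [0,0,0,0,1,-1,0,0]],
     [[1,-1,0,0,0,0,0,0], [0,0,1,-1,0,0,0,0], [0,0,0,0,1,1,0,0]],
     [[1,-1,0,0,0,0,0,0], [0,0,1,-1,0,0,0,0], [0,0,0,0,1,1,0,0]],
     [[1,-1,0,0,0,0,0,0], [0,0,1,1,0,0,0,0], [0,0,0,0,1,-1,0,0]],
     [[1,-1,0,0,0,0,0,0], [0,0,1,1,0,0,0,0], [0,0,0,0,1,-1,0,0]],
     [[1,-1,0,0,0,0,0,0], [0,0,1,1,0,0,0,0], [0,0,0,0,1,1,0,0]],
     [[1,-1,0,0,0,0,0,0], [0,0,1,1,0,0,0,0], [0,0,0,0,1,1,0,0]]]"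

definition orbit_witness_ok :: "int list \<Rightarrow> nat \<times> nat \<times> nat \<times> nat \<Rightarrow> bool" where
  "orbit_witness_ok x w \<longleftrightarrow> (case w of (i, C) \<Rightarrow> i < 15 \<and> C \<in> Lset \<and>
     (x = pauli_act C (orbit_reps ! i) \<or> x = neg (pauli_act C (orbit_reps ! i))))"

definition has_common_orthogonal :: "int list \<Rightarrow> int list list \<Rightarrow> int list \<Rightarrow> bool" where
  "has_common_orthogonal r Z v \<longleftrightarrow> dot r v = 0 \<or> v = r \<or> v = neg r \<or> list_ex (\<lambda>z. dot z v = 0) Z"

text \<open>Since the first tensor
  factor is self-adjoint up to sign, it is moved to \<open>r\<close>, so that only \<open>4 + 16\<close> transformed vectors
  are computed instead of \<open>64\<close>.\<close>

fun char_check_aux ::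
  "bool \<Rightarrow> nat \<times> nat \<times> nat \<Rightarrow> (nat \<times> int list) list \<Rightarrow> int list \<Rightarrow> (nat \<times> nat) list \<Rightarrow> bool" where
  "char_check_aux c K us r' [] = True"
| "char_check_aux c K us r' ((p2, p3) # ps) \<longleftrightarrow>
     list_all (\<lambda>(p1, u).
       dot u (pauli_bit1 p2 (pauli_bit0 p3 r')) = 0 \<longleftrightarrow> c \<noteq> pauli_anticomm3 K (p1, p2, p3)) us
     \<and> char_check_aux c K us r' ps"

definition char_check :: "int list \<Rightarrow> int list \<Rightarrow> nat \<times> nat \<times> nat \<Rightarrow> bool" where
  "char_check r r' K \<longleftrightarrow> K \<in> Lset \<and> char_check_aux (dot r r' = 0) K
     [(0, pauli_bit2 0 r), (1, pauli_bit2 1 r), (2, pauli_bit2 2 r), (3, pauli_bit2 3 r)] r'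
     (List.product [0, 1, 2, 3] [0, 1, 2, 3])"

fun char_row_ok :: "int list \<Rightarrow> int list list \<Rightarrow> (nat \<times> nat \<times> nat) list \<Rightarrow> bool" where
  "char_row_ok r (r' # rs) (K # Ks) \<longleftrightarrow> char_check r r' K \<and> char_row_ok r rs Ks"
| "char_row_ok r [] [] = True"
| "char_row_ok r _ _ = False"

fun char_table_ok :: "int list list \<Rightarrow> (nat \<times> nat \<times> nat) list list \<Rightarrow> bool" where
  "char_table_ok (r # rs) (Ks # Kss) \<longleftrightarrow> char_row_ok r rs Ks \<and> char_table_ok rs Kss"
| "char_table_ok [] [] = True"
| "char_table_ok _ _ = False"

lemma orbit_reps_roots: "set orbit_reps \<subseteq> e8_roots"
  by (simp add: orbit_reps_def e8_roots_def)

lemma length_orbit_reps: "length orbit_reps = 15"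
  by (simp add: orbit_reps_def)

lemma orbit_witnesses_correct: "list_all2 orbit_witness_ok positive_roots orbit_witnesses"
  by (simp add: positive_roots_def orbit_witnesses_def orbit_witness_ok_def orbit_reps_def Lset_iff
      pauli_act_def pauli_pair_def neg_def numeral_eq_Suc)

lemma orthogonal_candidates_correct:
  "list_all2 (\<lambda>r Z. list_all (\<lambda>z. z \<in> e8_roots \<and> dot r z = 0) Z) orbit_reps orthogonal_candidates"
  by (simp add: orbit_reps_def orthogonal_candidates_def e8_roots_def)

lemma common_orthogonal_correct:
  "list_all (\<lambda>v. list_all2 (\<lambda>r Z. has_common_orthogonal r Z v) orbit_reps orthogonal_candidates)
     positive_roots"
  by (simp add: orbit_reps_def orthogonal_candidates_def has_common_orthogonal_def positive_roots_def
      neg_def numeral_eq_Suc)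

lemma char_table_correct: "char_table_ok orbit_reps char_table"
  by code_simp

lemma orbit_rep_root: "i < 15 \<Longrightarrow> orbit_reps ! i \<in> e8_roots"
  using orbit_reps_roots length_orbit_reps by auto

lemma e8_root_orbit_rep:
  assumes "x \<in> e8_roots"
  obtains i C where "i < 15" "C \<in> Lset" "vert x = vert (pauli_act C (orbit_reps ! i))"
proof -
  obtain v where v: "v \<in> set positive_roots" "vert x = vert v"
    using e8_roots_positive[OF assms] by (metis vert_neg)
  then obtain n where n: "n < length positive_roots" "positive_roots ! n = v"
    by (auto simp: in_set_conv_nth)
  obtain i C where w: "orbit_witnesses ! n = (i, C)"
    by (cases "orbit_witnesses ! n")
  have "orbit_witness_ok v (i, C)"
    using list_all2_nthD[OF orbit_witnesses_correct n(1)] n(2) w by simp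
  then have "i < 15" "C \<in> Lset" "vert v = vert (pauli_act C (orbit_reps ! i))"
    by (auto simp: orbit_witness_ok_def vert_eq_iff)
  with v(2) show thesis
    using that by simp
qed

lemma L_orbit_orbit_rep:
  assumes "p \<in> e8_vertices"
  obtains i where "i < 15" "L_orbit p = L_orbit (vert (orbit_reps ! i))"
proof -
  obtain x where x: "x \<in> e8_roots" "p = vert x"
    using assms by (auto simp: e8_vertices_def)
  obtain i C where i: "i < 15" "C \<in> Lset" "vert x = vert (pauli_act C (orbit_reps ! i))"
    using e8_root_orbit_rep[OF x(1)] .
  have r: "length (orbit_reps ! i) = 8"
    using e8_root_length[OF orbit_rep_root[OF i(1)]] .
  then have "p \<in> L_orbit (vert (orbit_reps ! i))"
    using i x(2) by (simp add: L_orbit_vert)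
  then show thesis
    using that i(1) L_orbit_eq[OF r] by blast
qed

lemma char_check_aux_sound:
  "char_check_aux c K us r' ps \<Longrightarrow> (p2, p3) \<in> set ps \<Longrightarrow> (p1, u) \<in> set us \<Longrightarrow>
     dot u (pauli_bit1 p2 (pauli_bit0 p3 r')) = 0 \<longleftrightarrow> c \<noteq> pauli_anticomm3 K (p1, p2, p3)"
  by (induct c K us r' ps rule: char_check_aux.induct) (auto simp: list_all_iff)

lemma char_check_in_Lset: "char_check r r' K \<Longrightarrow> K \<in> Lset"
  by (simp add: char_check_def)

lemma char_check_sound:
  assumes check: "char_check r r' K" and r: "length r = 8" "length r' = 8" and P: "P \<in> Lset"
  shows "ip r (pauli_act P r') = 0 \<longleftrightarrow> (ip r r' = 0) \<noteq> pauli_anticomm3 K P"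
proof -
  obtain p1 p2 p3 where P_eq: "P = (p1, p2, p3)" and p: "p1 \<le> 3" "p2 \<le> 3" "p3 \<le> 3"
    using P by (cases P) (auto simp: Lset_iff)
  have aux: "char_check_aux (dot r r' = 0) K
      [(0, pauli_bit2 0 r), (1, pauli_bit2 1 r), (2, pauli_bit2 2 r), (3, pauli_bit2 3 r)] r'
      (List.product [0, 1, 2, 3] [0, 1, 2, 3])"
    using check unfolding char_check_def by (rule conjunct2)
  have "(p2, p3) \<in> set (List.product [0, 1, 2, 3] [0, 1, 2, 3])"
    using le_3_cases[OF p(2)] le_3_cases[OF p(3)] by auto
  moreover have "(p1, pauli_bit2 p1 r) \<in>
      set [(0, pauli_bit2 0 r), (1, pauli_bit2 1 r), (2, pauli_bit2 2 r), (3, pauli_bit2 3 r)]"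
    using le_3_cases[OF p(1)] by auto
  ultimately have "dot (pauli_bit2 p1 r) (pauli_bit1 p2 (pauli_bit0 p3 r')) = 0 \<longleftrightarrow>
      (dot r r' = 0) \<noteq> pauli_anticomm3 K (p1, p2, p3)"
    by (rule char_check_aux_sound[OF aux])
  moreover have "ip r (pauli_act P r') = 0 \<longleftrightarrow>
      ip (pauli_bit2 p1 r) (pauli_bit1 p2 (pauli_bit0 p3 r')) = 0"
    using ip_pauli_bit2_swap[OF p(1) r(1), of "pauli_bit1 p2 (pauli_bit0 p3 r')"] r(2)
    by (simp add: P_eq pauli_act_def)
  ultimately show ?thesis
    using r by (simp add: P_eq ip_eq_dot)
qed

lemma char_row_ok_nth:
  "char_row_ok r rs Ks \<Longrightarrow> j < length rs \<Longrightarrow> char_check r (rs ! j) (Ks ! j)"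
  by (induct r rs Ks arbitrary: j rule: char_row_ok.induct) (auto simp: nth_Cons split: nat.split)

lemma char_table_ok_nth:
  "char_table_ok rs Kss \<Longrightarrow> i < j \<Longrightarrow> j < length rs \<Longrightarrow> \<exists>K. char_check (rs ! i) (rs ! j) K"
proof (induct rs Kss arbitrary: i j rule: char_table_ok.induct)
  case (1 r rs Ks Kss)
  then obtain j' where j: "j = Suc j'" "j' < length rs"
    by (cases j) auto
  show ?case
  proof (cases i)
    case 0
    have "char_check r (rs ! j') (Ks ! j')"
      using 1 j char_row_ok_nth by simp
    with 0 j show ?thesis
      by (intro exI[of _ "Ks ! j'"]) simp
  next
    case (Suc i')
    then show ?thesis
      using 1 j by auto
  qed
qed auto

lemma char_table_sound:
  assumes "i < j" "j < 15"
  obtains K where "K \<in> Lset"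
    and "\<And>P. P \<in> Lset \<Longrightarrow> ip (orbit_reps ! i) (pauli_act P (orbit_reps ! j)) = 0 \<longleftrightarrow>
           (ip (orbit_reps ! i) (orbit_reps ! j) = 0) \<noteq> pauli_anticomm3 K P"
proof -
  obtain K where K: "char_check (orbit_reps ! i) (orbit_reps ! j) K"
    using char_table_ok_nth[OF char_table_correct] assms length_orbit_reps by force
  have "length (orbit_reps ! i) = 8" "length (orbit_reps ! j) = 8"
    using assms orbit_rep_root e8_root_length by simp_all
  with K show thesis
    using that char_check_in_Lset char_check_sound by blast
qed

lemma common_orthogonal_sound:
  assumes "i < 15" "v \<in> set positive_roots"
  shows "has_common_orthogonal (orbit_reps ! i) (orthogonal_candidates ! i) v"
  using common_orthogonal_correct assms length_orbit_reps
  by (auto simp: list_all_iff list_all2_conv_all_nth)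

lemma orthogonal_candidate_sound:
  assumes "i < 15" "z \<in> set (orthogonal_candidates ! i)"
  shows "z \<in> e8_roots" "ip (orbit_reps ! i) z = 0"
proof -
  have "z \<in> e8_roots \<and> dot (orbit_reps ! i) z = 0"
    using orthogonal_candidates_correct assms length_orbit_reps
    by (auto simp: list_all_iff list_all2_conv_all_nth)
  then show "z \<in> e8_roots" "ip (orbit_reps ! i) z = 0"
    using assms(1) orbit_rep_root e8_root_length by (simp_all add: ip_eq_dot)
qed

subsection \<open>Distances in \<open>G\<^sub>E\<^sub>8\<close>\<close>

lemma orbit_rep_common_orthogonal:
  assumes i: "i < 15" and v: "v \<in> e8_roots"
    and rv: "ip (orbit_reps ! i) v \<noteq> 0" "vert v \<noteq> vert (orbit_reps ! i)"
  obtains z where "z \<in> e8_roots" "ip (orbit_reps ! i) z = 0" "ip z v = 0"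
proof -
  define r where "r = orbit_reps ! i"
  have lr: "length r = 8" and lv: "length v = 8"
    using orbit_rep_root[OF i] v e8_root_length by (auto simp: r_def)
  obtain v' where v': "v' \<in> set positive_roots" "vert v' = vert v"
    using e8_roots_positive[OF v] by (metis vert_neg)
  have lv': "length v' = 8"
    using v'(2) lv by (auto simp: vert_eq_iff)
  have "dot r v' \<noteq> 0"
    using rv(1) ip_vert_cong_right[OF v'(2) lv, of r] lr lv' by (simp add: r_def ip_eq_dot)
  moreover have "v' \<noteq> r" "v' \<noteq> neg r"
    using rv(2) v'(2) vert_neg unfolding r_def by metis+
  moreover have "has_common_orthogonal r (orthogonal_candidates ! i) v'"
    using common_orthogonal_sound[OF i v'(1)] by (simp add: r_def)
  ultimately have "list_ex (\<lambda>z. dot z v' = 0) (orthogonal_candidates ! i)"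
    by (simp add: has_common_orthogonal_def)
  then obtain z where z: "z \<in> set (orthogonal_candidates ! i)" "dot z v' = 0"
    by (auto simp: list_ex_iff)
  have zr: "z \<in> e8_roots" "ip r z = 0"
    using orthogonal_candidate_sound[OF i z(1)] by (simp_all add: r_def)
  have "ip z v' = 0"
    using z(2) e8_root_length[OF zr(1)] lv' by (simp add: ip_eq_dot)
  with zr show thesis
    using that ip_vert_cong_right[OF v'(2) lv, of z] by (simp add: r_def)
qed

lemma e8_common_orthogonal_root:
  assumes u: "u \<in> e8_roots" and v: "v \<in> e8_roots" and uv: "ip u v \<noteq> 0" "vert u \<noteq> vert v"
  obtains z where "z \<in> e8_roots" "ip u z = 0" "ip z v = 0"
proof -
  obtain i C where i: "i < 15" and C: "C \<in> Lset"
    and u_eq: "vert u = vert (pauli_act C (orbit_reps ! i))"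
    using e8_root_orbit_rep[OF u] .
  define r where "r = orbit_reps ! i"
  have lr: "length r = 8" and lv: "length v = 8"
    using orbit_rep_root[OF i] v e8_root_length by (auto simp: r_def)
  have ne: "ip r (pauli_act C v) \<noteq> 0" "vert (pauli_act C v) \<noteq> vert r"
  proof -
    show "ip r (pauli_act C v) \<noteq> 0"
      using uv(1) ip_vert_cong_left[OF u_eq] ip_pauli_act_swap[OF C lr lv] lr by (simp add: r_def)
    show "vert (pauli_act C v) \<noteq> vert r"
    proof
      assume "vert (pauli_act C v) = vert r"
      then have "vert (pauli_act C (pauli_act C v)) = vert (pauli_act C r)"
        using vert_pauli_act_cong lr by blast
      then show False
        using uv(2) u_eq vert_pauli_act_twice[OF C lv] by (simp add: r_def)
    qed
  qed
  obtain z where z: "z \<in> e8_roots" "ip r z = 0" "ip z (pauli_act C v) = 0"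
    using orbit_rep_common_orthogonal[OF i pauli_act_root[OF v] ne[unfolded r_def]]
    unfolding r_def by blast
  have lz: "length z = 8"
    using e8_root_length[OF z(1)] .
  show thesis
  proof (rule that)
    show "pauli_act C z \<in> e8_roots"
      using pauli_act_root[OF z(1)] .
    show "ip u (pauli_act C z) = 0"
      using ip_vert_cong_left[OF u_eq] z(2) lr lz by (simp add: ip_pauli_act r_def)
    show "ip (pauli_act C z) v = 0"
      using z(3) ip_pauli_act_swap[OF C lz lv] by simp
  qed
qed

lemma e8_dist_vert:
  assumes u: "u \<in> e8_roots" and v: "v \<in> e8_roots" and uv: "vert u \<noteq> vert v"
  shows "e8_dist (vert u) (vert v) = (if ip u v = 0 then 1 else 2)"
proof (cases "ip u v = 0")
  case True
  have "(LEAST n. e8_walk n (vert u) (vert v)) = 1"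
  proof (rule Least_equality)
    show "e8_walk 1 (vert u) (vert v)"
      using True e8_adj_vert_iff[OF u v] by simp
    show "1 \<le> n" if "e8_walk n (vert u) (vert v)" for n
      using that uv by (cases n) auto
  qed
  with True show ?thesis
    by (simp add: e8_dist_def)
next
  case False
  obtain z where z: "z \<in> e8_roots" "ip u z = 0" "ip z v = 0"
    using e8_common_orthogonal_root[OF u v False uv] .
  have "(LEAST n. e8_walk n (vert u) (vert v)) = 2"
  proof (rule Least_equality)
    show "e8_walk 2 (vert u) (vert v)"
      using z e8_adj_vert_iff[OF u z(1)] e8_adj_vert_iff[OF z(1) v] by (auto simp: numeral_2_eq_2)
    show "2 \<le> n" if "e8_walk n (vert u) (vert v)" for n
    proof (rule ccontr)
      assume "\<not> 2 \<le> n"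
      then have "n = 0 \<or> n = 1"
        by arith
      then show False
        using that uv False e8_adj_vert_iff[OF u v] by auto
    qed
  qed
  with False show ?thesis
    by (simp add: e8_dist_def)
qed

subsection \<open>The orthogonality character\<close>

lemma orbit_rep_char:
  assumes "i < 15" "j < 15" "i \<noteq> j"
  obtains K where "K \<in> Lset"
    and "\<And>P. P \<in> Lset \<Longrightarrow> ip (orbit_reps ! i) (pauli_act P (orbit_reps ! j)) = 0 \<longleftrightarrow>
           (ip (orbit_reps ! i) (orbit_reps ! j) = 0) \<noteq> pauli_anticomm3 K P"
proof (cases "i < j")
  case True
  then show thesis
    using char_table_sound[OF True assms(2)] that by blast
next
  case False
  then have "j < i"
    using assms(3) by simp
  then obtain K where K: "K \<in> Lset"
    and char: "\<And>P. P \<in> Lset \<Longrightarrow> ip (orbit_reps ! j) (pauli_act P (orbit_reps ! i)) = 0 \<longleftrightarrow>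
                 (ip (orbit_reps ! j) (orbit_reps ! i) = 0) \<noteq> pauli_anticomm3 K P"
    using char_table_sound assms(1) by blast
  have "length (orbit_reps ! i) = 8" "length (orbit_reps ! j) = 8"
    using assms orbit_rep_root e8_root_length by simp_all
  then have "ip (orbit_reps ! i) (pauli_act P (orbit_reps ! j)) = 0 \<longleftrightarrow>
      (ip (orbit_reps ! i) (orbit_reps ! j) = 0) \<noteq> pauli_anticomm3 K P" if "P \<in> Lset" for P
    using char[OF that] ip_pauli_act_swap[OF that] by (simp add: ip_commute)
  with K show thesis
    using that by blast
qed

lemma orbit_rep_char_two_sided:
  assumes i: "i < 15" and j: "j < 15" and "i \<noteq> j"
  obtains K where "K \<in> Lset"
    and "\<And>A B u v. A \<in> Lset \<Longrightarrow> B \<in> Lset \<Longrightarrow>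
           vert u = vert (pauli_act A (orbit_reps ! i)) \<Longrightarrow> vert v = vert (pauli_act B (orbit_reps ! j)) \<Longrightarrow>
           ip u v = 0 \<longleftrightarrow> (ip (orbit_reps ! i) (orbit_reps ! j) = 0) \<noteq> (pauli_anticomm3 K A \<noteq> pauli_anticomm3 K B)"
proof -
  define r s where "r = orbit_reps ! i" and "s = orbit_reps ! j"
  have rs: "length r = 8" "length s = 8"
    using orbit_rep_root i j e8_root_length by (simp_all add: r_def s_def)
  obtain K where K: "K \<in> Lset"
    and char: "\<And>P. P \<in> Lset \<Longrightarrow> ip r (pauli_act P s) = 0 \<longleftrightarrow> (ip r s = 0) \<noteq> pauli_anticomm3 K P"
    using orbit_rep_char[OF assms] unfolding r_def s_def by blast
  have "ip u v = 0 \<longleftrightarrow> (ip r s = 0) \<noteq> (pauli_anticomm3 K A \<noteq> pauli_anticomm3 K B)"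
    if A: "A \<in> Lset" and B: "B \<in> Lset"
      and u: "vert u = vert (pauli_act A r)" and v: "vert v = vert (pauli_act B s)" for A B u v
  proof -
    have "ip u v = 0 \<longleftrightarrow> ip (pauli_act A r) (pauli_act B s) = 0"
      using ip_vert_cong_left[OF u] ip_vert_cong_right[OF v] rs by simp
    also have "\<dots> \<longleftrightarrow> ip r (pauli_act A (pauli_act B s)) = 0"
      using ip_pauli_act_swap[OF A] rs by simp
    also have "\<dots> \<longleftrightarrow> ip r (pauli_act (pauli_mult3 A B) s) = 0"
      using ip_vert_cong_right[OF vert_pauli_act_mult[OF A B rs(2)]] rs by simp
    also have "\<dots> \<longleftrightarrow> (ip r s = 0) \<noteq> (pauli_anticomm3 K A \<noteq> pauli_anticomm3 K B)"
      using char[OF pauli_mult3_in_Lset[OF A B]] pauli_anticomm3_mult[OF K A B] by simp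
    finally show ?thesis .
  qed
  with K show thesis
    using that unfolding r_def s_def by blast
qed

lemma orthogonality_character:
  assumes p: "p \<in> e8_vertices" and q: "q \<in> e8_vertices" and pq: "L_orbit p \<noteq> L_orbit q"
  obtains K where "K \<in> Lset"
    and "\<And>x y P Q. length x = 8 \<Longrightarrow> length y = 8 \<Longrightarrow> vert x \<in> L_orbit p \<Longrightarrow> vert y \<in> L_orbit q \<Longrightarrow>
           P \<in> Lset \<Longrightarrow> Q \<in> Lset \<Longrightarrow>
           ip (pauli_act P x) (pauli_act Q y) = 0 \<longleftrightarrow>
             (ip x y = 0) \<noteq> (pauli_anticomm3 K P \<noteq> pauli_anticomm3 K Q)"
proof -
  obtain i where i: "i < 15" "L_orbit p = L_orbit (vert (orbit_reps ! i))"
    using L_orbit_orbit_rep[OF p] .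
  obtain j where j: "j < 15" "L_orbit q = L_orbit (vert (orbit_reps ! j))"
    using L_orbit_orbit_rep[OF q] .
  define r s where "r = orbit_reps ! i" and "s = orbit_reps ! j"
  have rs: "length r = 8" "length s = 8"
    using orbit_rep_root i(1) j(1) e8_root_length by (simp_all add: r_def s_def)
  have "i \<noteq> j"
    using i j pq by auto
  then obtain K where K: "K \<in> Lset"
    and reps: "\<And>A B u v. A \<in> Lset \<Longrightarrow> B \<in> Lset \<Longrightarrow>
      vert u = vert (pauli_act A r) \<Longrightarrow> vert v = vert (pauli_act B s) \<Longrightarrow>
      ip u v = 0 \<longleftrightarrow> (ip r s = 0) \<noteq> (pauli_anticomm3 K A \<noteq> pauli_anticomm3 K B)"
    using orbit_rep_char_two_sided[OF i(1) j(1)] unfolding r_def s_def by blast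
  show thesis
  proof (rule that[OF K])
    fix x y P Q
    assume x: "length x = 8" and y: "length y = 8"
      and xp: "vert x \<in> L_orbit p" and yq: "vert y \<in> L_orbit q" and P: "P \<in> Lset" and Q: "Q \<in> Lset"
    obtain A where A: "A \<in> Lset" "vert x = vert (pauli_act A r)"
      using xp i(2) rs by (auto simp: L_orbit_vert r_def)
    obtain B where B: "B \<in> Lset" "vert y = vert (pauli_act B s)"
      using yq j(2) rs by (auto simp: L_orbit_vert s_def)
    have "vert (pauli_act P x) = vert (pauli_act (pauli_mult3 P A) r)"
      using vert_pauli_act_cong[OF A(2)] vert_pauli_act_mult[OF P A(1) rs(1)] rs by simp
    moreover have "vert (pauli_act Q y) = vert (pauli_act (pauli_mult3 Q B) s)"
      using vert_pauli_act_cong[OF B(2)] vert_pauli_act_mult[OF Q B(1) rs(2)] rs by simp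
    ultimately have "ip (pauli_act P x) (pauli_act Q y) = 0 \<longleftrightarrow>
        (ip r s = 0) \<noteq> (pauli_anticomm3 K (pauli_mult3 P A) \<noteq> pauli_anticomm3 K (pauli_mult3 Q B))"
      by (rule reps[OF pauli_mult3_in_Lset[OF P A(1)] pauli_mult3_in_Lset[OF Q B(1)]])
    moreover have "ip x y = 0 \<longleftrightarrow> (ip r s = 0) \<noteq> (pauli_anticomm3 K A \<noteq> pauli_anticomm3 K B)"
      using reps[OF A(1) B(1) A(2) B(2)] .
    ultimately show "ip (pauli_act P x) (pauli_act Q y) = 0 \<longleftrightarrow>
        (ip x y = 0) \<noteq> (pauli_anticomm3 K P \<noteq> pauli_anticomm3 K Q)"
      using pauli_anticomm3_mult[OF K P A(1)] pauli_anticomm3_mult[OF K Q B(1)] by auto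
  qed
qed

theorem lemma3p7:
  fixes k s l t :: "int list set" and wi wj :: "int list"
    and M N :: "nat \<times> nat \<times> nat"
  assumes "k \<in> e8_vertices" and "l \<in> e8_vertices"
    and "s \<in> L_orbit k" and "t \<in> L_orbit l"
    and "L_orbit k \<noteq> L_orbit l"
    and "wi \<in> e8_roots" and "vert wi \<in> L_orbit k"
    and "wj \<in> e8_roots" and "vert wj \<in> L_orbit l"
    and "M \<in> Lset" and "vmap M k = s"
    and "N \<in> Lset" and "vmap N l = t"
  shows "(e8_dist k l = e8_dist s t \<longrightarrow>
            (proj (act M wi) * proj (act N wj) = 0\<^sub>m 8 8 \<longleftrightarrow> ip wi wj = 0))
       \<and> (e8_dist k l \<noteq> e8_dist s t \<longrightarrow>
            (proj (act M wi) * proj (act N wj) = 0\<^sub>m 8 8 \<longleftrightarrow> ip wi wj \<noteq> 0))"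
proof -
  obtain x y where x: "x \<in> e8_roots" "k = vert x" and y: "y \<in> e8_roots" "l = vert y"
    using assms(1,2) by (auto simp: e8_vertices_def)
  have len: "length x = 8" "length y = 8" "length wi = 8" "length wj = 8"
    using x(1) y(1) assms(6,8) e8_root_length by auto
  obtain K where char: "\<And>x' y'. length x' = 8 \<Longrightarrow> length y' = 8 \<Longrightarrow> vert x' \<in> L_orbit k \<Longrightarrow>
      vert y' \<in> L_orbit l \<Longrightarrow> ip (pauli_act M x') (pauli_act N y') = 0 \<longleftrightarrow>
        (ip x' y' = 0) \<noteq> (pauli_anticomm3 K M \<noteq> pauli_anticomm3 K N)"
    using orthogonality_character[OF assms(1,2,5)] assms(10,12) by metis
  have st: "s = vert (pauli_act M x)" "t = vert (pauli_act N y)"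
    using assms(10-13) x(2) y(2) len by (simp_all add: vmap_vert)
  have "k \<noteq> l"
    using assms(5) by auto
  have "s \<noteq> t"
    using L_orbit_eq[OF len(1)] L_orbit_eq[OF len(2)] assms(3-5) x(2) y(2) by metis
  have dist: "e8_dist k l = (if ip x y = 0 then 1 else 2)"
      "e8_dist s t = (if ip (pauli_act M x) (pauli_act N y) = 0 then 1 else 2)"
    using e8_dist_vert[OF x(1) y(1)]
      e8_dist_vert[OF pauli_act_root[OF x(1)] pauli_act_root[OF y(1)]]
      \<open>k \<noteq> l\<close> \<open>s \<noteq> t\<close> x(2) y(2) st by simp_all
  have "proj (act M wi) * proj (act N wj) = 0\<^sub>m 8 8 \<longleftrightarrow> ip (pauli_act M wi) (pauli_act N wj) = 0"
    using proj_mult_proj_eq_0_iff ip_self_root pauli_act_root assms(6,8,10,12) len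
    by (simp add: act_eq_pauli_act)
  then show ?thesis
    using char[OF len(3,4) assms(7,9)] char[OF len(1,2)] vert_in_L_orbit len x(2) y(2) dist by auto
qed

end
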